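(* Let $(\mathfrak{A},\mathfrak{A}_0)$ be a CQ*-algebra as in the context, let $X\in\mathfrak{A}$, $\alpha\in\mathbb{C}$ and $\omega\in E(\mathfrak{A}_0)$. The following are equivalent: (i) $\overline{\omega}$ is an eigenstate of $X$ with eigenvalue $\alpha$, i.e. $\overline{\omega}(AX)=\alpha\,\overline{\omega}(A)$ for all $A\in\mathfrak{A}_0$; (ii) the unbounded vector $\pi_{\overline{\omega}}(X)\lambda_\omega(I)$ is bounded and $[\pi_{\overline{\omega}}(X)\lambda_\omega(I)]=\alpha\lambda_\omega(I)$.
   Context: Let $\mathfrak{A}_0$ be a unital C*-algebra with C*-norm $\|\cdot\|_0$ and unit $I$, and let $\|\cdot\|$ be another norm on $\mathfrak{A}_0$ with $\|A\|\le\|A\|_0$, $\|AB\|\le\|A\|\,\|B\|_0$, $\|A^*\|=\|A\|$. Let $\mathfrak{A}$ be the $\|\cdot\|$-completion of $\mathfrak{A}_0$; for $X\in\mathfrak{A}$, $A\in\mathfrak{A}_0$ and $A_n\to X$ in $\|\cdot\|$ ($A_n\in\mathfrak{A}_0$), $XA:=\lim A_nA$, $AX:=\lim AA_n$, $X^*:=\lim A_n^*$. $E(\mathfrak{A}_0)$ is the set of positive linear functionals $\omega$ on $\mathfrak{A}_0$ with $\omega(I)=1$ and $|\omega(A)|\le\gamma\|A\|$ for some $\gamma>0$ and all $A$; $\overline{\omega}$ is its continuous extension to $\mathfrak{A}$, $\overline{\omega}(X)=\lim\omega(A_n)$. $(\pi_\omega,\lambda_\omega,\mathcal{H}_\omega)$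 is the GNS construction of $\omega$ on $\mathfrak{A}_0$: $\lambda_\omega:\mathfrak{A}_0\to\mathcal{H}_\omega$ linear with dense range, $(\lambda_\omega(A)|\lambda_\omega(B))=\omega(B^*A)$. For $X\in\mathfrak{A}$, $\pi_{\overline{\omega}}(X)$ maps each $\lambda_\omega(B)$, $B\in\mathfrak{A}_0$, to the conjugate-linear functional (unbounded vector) on $\lambda_\omega(\mathfrak{A}_0)$ given by $\langle\pi_{\overline{\omega}}(X)\lambda_\omega(B),\lambda_\omega(C)\rangle=\overline{\omega}(C^*XB)=\lim_n(\pi_\omega(A_n)\lambda_\omega(B)|\lambda_\omega(C))$. A conjugate-linear functional $v$ on the dense subspace $\lambda_\omega(\mathfrak{A}_0)$ is called bounded if it extends continuously to $\mathcal{H}_\omega$; then $[v]$ denotes the unique vector of $\mathcal{H}_\omega$ with $\langle v,\eta\rangle=([v]|\eta)$ for all $\eta\in\lambda_\omega(\mathfrak{A}_0)$. *)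

theory Defs
  imports "HOL-Analysis.Analysis"
begin

text \<open>The unital C*-algebra A0 is modelled by a type 'a of class
  real_normed_algebra_1 + banach (norm = C*-norm, 1 = unit I), together with an
  explicit complex scalar multiplication sc and an involution star.\<close>

definition complex_alg :: "(complex \<Rightarrow> 'a::{real_normed_algebra_1,banach} \<Rightarrow> 'a) \<Rightarrow> bool" where
  "complex_alg sc \<longleftrightarrow>
     (\<forall>r x. sc (complex_of_real r) x = r *\<^sub>R x) \<and>
     (\<forall>a b x. sc (a * b) x = sc a (sc b x)) \<and>
     (\<forall>a x y. sc a (x + y) = sc a x + sc a y) \<and>
     (\<forall>a b x. sc (a + b) x = sc a x + sc b x) \<and>
     (\<forall>a x y. sc a (x * y) = sc a x * y \<and> sc a (x * y) = x * sc a y) \<and>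
     (\<forall>a x. norm (sc a x) = cmod a * norm x)"

definition cstar_algebra ::
  "(complex \<Rightarrow> 'a::{real_normed_algebra_1,banach} \<Rightarrow> 'a) \<Rightarrow> ('a \<Rightarrow> 'a) \<Rightarrow> bool" where
  "cstar_algebra sc star \<longleftrightarrow> complex_alg sc \<and>
     (\<forall>x. star (star x) = x) \<and>
     (\<forall>x y. star (x + y) = star x + star y) \<and>
     (\<forall>a x. star (sc a x) = sc (cnj a) (star x)) \<and>
     (\<forall>x y. star (x * y) = star y * star x) \<and>
     (\<forall>x. norm (star x * x) = (norm x)\<^sup>2)"

definition second_norm ::
  "(complex \<Rightarrow> 'a::{real_normed_algebra_1,banach} \<Rightarrow> 'a) \<Rightarrow> ('a \<Rightarrow> 'a) \<Rightarrow> ('a \<Rightarrow> real) \<Rightarrow> bool" where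
  "second_norm sc star nrm \<longleftrightarrow>
     (\<forall>x. 0 \<le> nrm x) \<and> (\<forall>x. nrm x = 0 \<longrightarrow> x = 0) \<and>
     (\<forall>x y. nrm (x + y) \<le> nrm x + nrm y) \<and>
     (\<forall>a x. nrm (sc a x) = cmod a * nrm x) \<and>
     (\<forall>x. nrm x \<le> norm x) \<and>
     (\<forall>x y. nrm (x * y) \<le> nrm x * norm y) \<and>
     (\<forall>x. nrm (star x) = nrm x)"

definition E_state ::
  "(complex \<Rightarrow> 'a::{real_normed_algebra_1,banach} \<Rightarrow> 'a) \<Rightarrow> ('a \<Rightarrow> 'a) \<Rightarrow> ('a \<Rightarrow> real) \<Rightarrow> ('a \<Rightarrow> complex) \<Rightarrow> bool" where
  "E_state sc star nrm \<omega> \<longleftrightarrow>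
     (\<forall>x y. \<omega> (x + y) = \<omega> x + \<omega> y) \<and>
     (\<forall>a x. \<omega> (sc a x) = a * \<omega> x) \<and>
     (\<forall>x. Im (\<omega> (star x * x)) = 0 \<and> 0 \<le> Re (\<omega> (star x * x))) \<and>
     \<omega> 1 = 1 \<and>
     (\<exists>\<gamma>>0. \<forall>x. cmod (\<omega> x) \<le> \<gamma> * nrm x)"

text \<open>Elements X of the completion A are represented by \<parallel>.\<parallel>-Cauchy sequences in A0
  (A_n \<rightarrow> X); products with elements of A0 are taken termwise, as in the paper.\<close>
definition nrm_cauchy :: "('a::{real_normed_algebra_1,banach} \<Rightarrow> real) \<Rightarrow> (nat \<Rightarrow> 'a) \<Rightarrow> bool" where
  "nrm_cauchy nrm An \<longleftrightarrow> (\<forall>e>0. \<exists>N. \<forall>m\<ge>N. \<forall>n\<ge>N. nrm (An m - An n) < e)"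

definition omega_bar :: "('a \<Rightarrow> complex) \<Rightarrow> (nat \<Rightarrow> 'a) \<Rightarrow> complex" where
  "omega_bar \<omega> Xs = lim (\<lambda>n. \<omega> (Xs n))"

definition eigenstate :: "('a::{real_normed_algebra_1,banach} \<Rightarrow> complex) \<Rightarrow> (nat \<Rightarrow> 'a) \<Rightarrow> complex \<Rightarrow> bool" where
  "eigenstate \<omega> An \<alpha> \<longleftrightarrow> (\<forall>A. omega_bar \<omega> (\<lambda>n. A * An n) = \<alpha> * omega_bar \<omega> (\<lambda>n. A))"

text \<open>GNS: the vector lambda_omega(A) is represented by A; inner product
  (lambda A | lambda B) = omega(B* A); norm ||lambda C|| = sqrt omega(C* C).\<close>
definition gns_ip :: "('a::{real_normed_algebra_1,banach} \<Rightarrow> 'a) \<Rightarrow> ('a \<Rightarrow> complex) \<Rightarrow> 'a \<Rightarrow> 'a \<Rightarrow> complex" where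
  "gns_ip star \<omega> A B = \<omega> (star B * A)"

definition gns_norm :: "('a::{real_normed_algebra_1,banach} \<Rightarrow> 'a) \<Rightarrow> ('a \<Rightarrow> complex) \<Rightarrow> 'a \<Rightarrow> real" where
  "gns_norm star \<omega> C = sqrt (Re (\<omega> (star C * C)))"

text \<open>The unbounded vector pi_omegabar(X) lambda_omega(B), as the conjugate-linear
  functional lambda_omega(C) |-> omegabar(C* X B).\<close>
definition pi_bar_vec :: "('a::{real_normed_algebra_1,banach} \<Rightarrow> 'a) \<Rightarrow> ('a \<Rightarrow> complex) \<Rightarrow> (nat \<Rightarrow> 'a) \<Rightarrow> 'a \<Rightarrow> 'a \<Rightarrow> complex" where
  "pi_bar_vec star \<omega> An B = (\<lambda>C. omega_bar \<omega> (\<lambda>n. star C * An n * B))"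

text \<open>Boundedness of a functional on the dense subspace lambda_omega(A0)
  (equivalently: it extends continuously to H_omega).\<close>
definition bounded_uv :: "('a::{real_normed_algebra_1,banach} \<Rightarrow> 'a) \<Rightarrow> ('a \<Rightarrow> complex) \<Rightarrow> ('a \<Rightarrow> complex) \<Rightarrow> bool" where
  "bounded_uv star \<omega> v \<longleftrightarrow> (\<exists>K. \<forall>C. cmod (v C) \<le> K * gns_norm star \<omega> C)"

text \<open>[v] = lambda_omega(xi): the vector lambda_omega(xi) satisfies
  <v, eta> = (lambda_omega(xi) | eta) for all eta in lambda_omega(A0)
  (by uniqueness of [v] this characterises [v] = lambda_omega(xi)).\<close>
definition represents :: "('a::{real_normed_algebra_1,banach} \<Rightarrow> 'a) \<Rightarrow> ('a \<Rightarrow> complex) \<Rightarrow> 'a \<Rightarrow> ('a \<Rightarrow> complex) \<Rightarrow> bool" where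
  "represents star \<omega> \<xi> v \<longleftrightarrow> (\<forall>C. v C = gns_ip star \<omega> \<xi> C)"

end

theory Submission
  imports Defs
begin

text \<open>Since \<open>\<langle>\<pi>(X)\<lambda>(I), \<lambda>(C)\<rangle> = \<omega>(C\<^sup>* X)\<close> and \<open>(\<alpha>\<lambda>(I) | \<lambda>(C)) = \<alpha> \<omega>(C\<^sup>*)\<close>,
  the identity \<open>[\<pi>(X)\<lambda>(I)] = \<alpha>\<lambda>(I)\<close> is the eigenstate equation for \<open>A = C\<^sup>*\<close>, and
  every \<open>A\<close> is of this form. Boundedness then comes for free from the Cauchy-Schwarz
  inequality \<open>|\<omega>(C\<^sup>*)| \<le> \<parallel>\<lambda>(C)\<parallel>\<close> for the state \<open>\<omega>\<close>.\<close>

lemma omega_bar_const: "omega_bar \<omega> (\<lambda>n. A) = \<omega> A"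
  unfolding omega_bar_def by (simp add: limI)

lemma pi_bar_vec_one: "pi_bar_vec star \<omega> An 1 C = omega_bar \<omega> (\<lambda>n. star C * An n)"
  unfolding pi_bar_vec_def by simp

lemma cstar_algebraD:
  assumes "cstar_algebra sc star"
  shows "star (star x) = x" and "star (x + y) = star x + star y"
    and "star (sc a x) = sc (cnj a) (star x)" and "star (x * y) = star y * star x"
    and "sc (a * b) x = sc a (sc b x)"
    and "sc a (x * y) = sc a x * y" and "sc a (x * y) = x * sc a y"
  using assms unfolding cstar_algebra_def complex_alg_def by meson+

lemma cstar_algebra_star_one:
  assumes "cstar_algebra sc star"
  shows "star 1 = 1"
proof -
  note star = cstar_algebraD[OF assms]
  have "star 1 = star 1 * star (star 1)" by (simp add: star(1))
  also have "\<dots> = star (star 1 * 1)" by (rule star(4)[symmetric])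
  also have "\<dots> = 1" by (simp add: star(1))
  finally show ?thesis .
qed

text \<open>A nonnegative Hermitian quadratic form \<open>c + t a + t\<^sup>* b + |t|\<^sup>2\<close> on \<open>\<complex>\<close> forces
  \<open>b = a\<^sup>*\<close>; evaluating at the minimiser \<open>t = -a\<^sup>*\<close> gives the bound.\<close>
lemma cmod_sq_le_of_nonneg_quadratic:
  fixes a b c :: complex
  assumes nonneg: "\<And>t. Im (c + t * a + cnj t * b + t * cnj t) = 0 \<and>
                        0 \<le> Re (c + t * a + cnj t * b + t * cnj t)"
  shows "(cmod a)\<^sup>2 \<le> Re c"
proof -
  have c_real: "Im c = 0" using nonneg[of 0] by auto
  have "Im (a + b) = 0" using nonneg[of 1] c_real by simp
  moreover have "Re a = Re b" using nonneg[of \<i>] c_real by (simp add: algebra_simps)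
  ultimately have b_eq: "b = cnj a" by (simp add: complex_eq_iff)
  have "0 \<le> Re (c + (- cnj a) * a + cnj (- cnj a) * b + (- cnj a) * cnj (- cnj a))"
    using nonneg[of "- cnj a"] by blast
  then show ?thesis using b_eq by (simp add: cmod_def power2_eq_square algebra_simps)
qed

lemma state_star_le_gns_norm:
  assumes "cstar_algebra sc star"
    and add: "\<And>x y. \<omega> (x + y) = \<omega> x + \<omega> y"
    and scale: "\<And>a x. \<omega> (sc a x) = a * \<omega> x"
    and pos: "\<And>x. Im (\<omega> (star x * x)) = 0 \<and> 0 \<le> Re (\<omega> (star x * x))"
    and unital: "\<omega> 1 = 1"
  shows "cmod (\<omega> (star C)) \<le> gns_norm star \<omega> C"
proof -
  note sadd = cstar_algebraD(2)[OF assms(1)] and ssc = cstar_algebraD(3)[OF assms(1)]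
    and scc = cstar_algebraD(5)[OF assms(1)]
    and scm1 = cstar_algebraD(6)[OF assms(1)] and scm2 = cstar_algebraD(7)[OF assms(1)]
  have expand: "\<omega> (star (C + sc t 1) * (C + sc t 1)) =
      \<omega> (star C * C) + t * \<omega> (star C) + cnj t * \<omega> C + t * cnj t" for t
  proof -
    have "star (C + sc t 1) * (C + sc t 1) = (star C + sc (cnj t) 1) * (C + sc t 1)"
      by (simp add: sadd ssc cstar_algebra_star_one[OF assms(1)])
    also have "\<dots> = star C * C + star C * sc t 1 + sc (cnj t) 1 * C + sc (cnj t) 1 * sc t 1"
      by (simp add: algebra_simps)
    also have "\<dots> = star C * C + sc t (star C) + sc (cnj t) C + sc (t * cnj t) 1"
    proof -
      have "star C * sc t 1 = sc t (star C)" by (metis scm2 mult.right_neutral)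
      moreover have "sc (cnj t) 1 * C = sc (cnj t) C" by (metis scm1 mult.left_neutral)
      moreover have "sc (cnj t) 1 * sc t 1 = sc (t * cnj t) 1"
        by (metis scm1 scc mult.left_neutral mult.commute)
      ultimately show ?thesis by (simp only:)
    qed
    finally show ?thesis by (simp add: add scale unital)
  qed
  have "(cmod (\<omega> (star C)))\<^sup>2 \<le> Re (\<omega> (star C * C))"
    by (rule cmod_sq_le_of_nonneg_quadratic[where b="\<omega> C"]) (simp only: expand[symmetric] pos)
  then show ?thesis
    unfolding gns_norm_def by (simp add: real_le_rsqrt)
qed

lemma gns_ip_scaled_one:
  assumes "cstar_algebra sc star" and scale: "\<And>a x. \<omega> (sc a x) = a * \<omega> x"
  shows "gns_ip star \<omega> (sc \<alpha> 1) C = \<alpha> * \<omega> (star C)"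
proof -
  have "star C * sc \<alpha> 1 = sc \<alpha> (star C)"
    by (metis cstar_algebraD(7)[OF assms(1)] mult.right_neutral)
  then show ?thesis unfolding gns_ip_def by (simp add: scale)
qed

lemma eigenstate_iff_represents:
  assumes "cstar_algebra sc star" and "\<And>a x. \<omega> (sc a x) = a * \<omega> x"
  shows "eigenstate \<omega> An \<alpha> \<longleftrightarrow> represents star \<omega> (sc \<alpha> 1) (pi_bar_vec star \<omega> An 1)"
proof -
  note star_star = cstar_algebraD(1)[OF assms(1)]
  show ?thesis
    unfolding eigenstate_def represents_def pi_bar_vec_one gns_ip_scaled_one[OF assms]
      omega_bar_const
    by (metis star_star)
qed

lemma bounded_uv_scaled_star:
  assumes "\<And>C. cmod (\<omega> (star C)) \<le> gns_norm star \<omega> C"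
  shows "bounded_uv star \<omega> (\<lambda>C. \<alpha> * \<omega> (star C))"
  unfolding bounded_uv_def
  by (rule exI[of _ "cmod \<alpha>"]) (simp add: norm_mult assms mult_left_mono)

theorem lemma4p2:
  fixes sc :: "complex \<Rightarrow> 'a::{real_normed_algebra_1,banach} \<Rightarrow> 'a"
    and star :: "'a \<Rightarrow> 'a" and nrm :: "'a \<Rightarrow> real" and \<omega> :: "'a \<Rightarrow> complex"
    and An :: "nat \<Rightarrow> 'a" and \<alpha> :: complex
  assumes "cstar_algebra sc star"
    and "second_norm sc star nrm"
    and "E_state sc star nrm \<omega>"
    and "nrm_cauchy nrm An"
  shows "eigenstate \<omega> An \<alpha> \<longleftrightarrow>
         (bounded_uv star \<omega> (pi_bar_vec star \<omega> An 1) \<and>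
          represents star \<omega> (sc \<alpha> 1) (pi_bar_vec star \<omega> An 1))"
proof -
  have scale: "\<And>a x. \<omega> (sc a x) = a * \<omega> x"
    using assms(3) unfolding E_state_def by blast
  have star_bound: "\<And>C. cmod (\<omega> (star C)) \<le> gns_norm star \<omega> C"
    using assms(3) unfolding E_state_def
    by (intro state_star_le_gns_norm[OF assms(1)]) auto
  have "bounded_uv star \<omega> (pi_bar_vec star \<omega> An 1)"
    if "represents star \<omega> (sc \<alpha> 1) (pi_bar_vec star \<omega> An 1)"
  proof -
    have "pi_bar_vec star \<omega> An 1 = (\<lambda>C. \<alpha> * \<omega> (star C))"
      using that unfolding represents_def gns_ip_scaled_one[OF assms(1) scale] by blast
    then show ?thesis using bounded_uv_scaled_star[OF star_bound] by simp
  qed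
  then show ?thesis
    using eigenstate_iff_represents[OF assms(1) scale] by blast
qed

end
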